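(* Let $T$ be a (possibly unbounded) linear operator in a separable Banach space $X$, and let $D(T^\infty):=\bigcap_{n\ge0}D(T^n)$. Suppose that: (1) there are a set $Y_0\subset D(T^\infty)$, dense in $X$, and a mapping $S:Y_0\to Y_0$ such that (a) $TSy=y$ for all $y\in Y_0$; (b) $\sum_{n=1}^\infty S^ny$ converges unconditionally for all $y\in Y_0$; (c) $\sum_{n=1}^\infty T^ny$ converges unconditionally for all $y\in Y_0$; (2) there is a bounded operator $C\in B(X)$ such that (a) $\operatorname{Im}(C)\subset D(T^\infty)$ and $T^nC\in B(X)$ for all $n\in\mathbb{N}$; (b) $CTx=TCx$ for all $x\in D(T^\infty)$; (c) $\operatorname{Im}(C)$ is dense in $X$. Then $T$ is frequently hypercyclic.
   Context: $D(T^n)=\{x: x,Tx,\dots,T^{n-1}x\in D(T)\}$. A series $\sum_k x_k$ converges unconditionally if for every $\varepsilon>0$ there is $N$ with $\|\sum_{k\in F}x_k\|<\varepsilon$ for every finite $F\subset\mathbb{N}$ disjoint from $\{1,\dots,N\}$. $T$ is frequently hypercyclic if there is $f\in D(T)$ with $T^nf\in D(T)$ for all $n\ge1$ such that for every non-empty open $U\subset X$ the set $\{n\in\mathbb{N}: T^nf\in U\}$ has positive lower density, where the lower density of $E\subset\mathbb{N}$ is $\liminf_{N\to\infty}\#(E\cap\{1,\dots,N\})/N$. *)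

theory Defs
  imports "HOL-Analysis.Analysis"
begin

definition lin_op :: "'a::real_normed_vector set \<Rightarrow> ('a \<Rightarrow> 'a) \<Rightarrow> bool" where
  "lin_op D T \<longleftrightarrow> subspace D \<and>
     (\<forall>x\<in>D. \<forall>y\<in>D. T (x + y) = T x + T y) \<and> (\<forall>x\<in>D. \<forall>c. T (c *\<^sub>R x) = c *\<^sub>R T x)"

definition dom_pow :: "'a set \<Rightarrow> ('a \<Rightarrow> 'a) \<Rightarrow> nat \<Rightarrow> 'a set" where
  "dom_pow D T n = {x. \<forall>k<n. (T ^^ k) x \<in> D}"

definition dom_inf :: "'a set \<Rightarrow> ('a \<Rightarrow> 'a) \<Rightarrow> 'a set" where
  "dom_inf D T = (\<Inter>n. dom_pow D T n)"

definition separable_space :: "'a::metric_space itself \<Rightarrow> bool" where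
  "separable_space _ \<longleftrightarrow> (\<exists>A::'a set. countable A \<and> closure A = UNIV)"

text \<open>Unconditional convergence of the series sum_{k>=1} x_k (index 0 is never used).\<close>
definition uncond_conv :: "(nat \<Rightarrow> 'a::real_normed_vector) \<Rightarrow> bool" where
  "uncond_conv x \<longleftrightarrow> (\<forall>\<epsilon>>0. \<exists>N. \<forall>F. finite F \<and> F \<inter> {..N} = {} \<longrightarrow> norm (sum x F) < \<epsilon>)"

definition lower_density :: "nat set \<Rightarrow> ereal" where
  "lower_density E = liminf (\<lambda>N. ereal (real (card (E \<inter> {1..N})) / real N))"

definition freq_hypercyclic :: "'a::real_normed_vector set \<Rightarrow> ('a \<Rightarrow> 'a) \<Rightarrow> bool" where
  "freq_hypercyclic D T \<longleftrightarrow> (\<exists>f. f \<in> D \<and> (\<forall>n\<ge>1. (T ^^ n) f \<in> D) \<and>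
     (\<forall>U. open U \<and> U \<noteq> {} \<longrightarrow> lower_density {n. n \<ge> 1 \<and> (T ^^ n) f \<in> U} > 0))"

end

theory Submission
  imports Defs
begin

text \<open>
  Choose \<open>y\<^sub>0, y\<^sub>1, \<dots>\<close> in \<open>Y0\<close> such that every point is approximated by \<open>C y\<^sub>k\<close> for
  infinitely many \<open>k\<close>; thresholds \<open>N\<^sub>k\<close> beyond which the two-sided orbits
  \<open>\<dots>, T\<^sup>2 y\<^sub>l, T y\<^sub>l, y\<^sub>l, S y\<^sub>l, S\<^sup>2 y\<^sub>l, \<dots>\<close> with \<open>l \<le> k\<close> have unconditional tails of norm
  at most \<open>2^(-k-l)\<close>; and pairwise disjoint sets \<open>A\<^sub>k\<close> of positive lower density with
  \<open>min A\<^sub>k > N\<^sub>k\<close> and \<open>|n - m| > max N\<^sub>k N\<^sub>l\<close> for distinct \<open>n \<in> A\<^sub>k\<close>, \<open>m \<in> A\<^sub>l\<close>.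
  Put \<open>f = C g\<close> with \<open>g = \<Sum>\<^sub>l \<Sum>\<^sub>m\<^sub>\<in>\<^sub>A\<^sub>l S\<^sup>m y\<^sub>l\<close>. As \<open>T\<^sup>n S\<^sup>m y\<close> is \<open>S^(m-n) y\<close> or \<open>T^(n-m) y\<close>, for
  \<open>n \<in> A\<^sub>k\<close> the series of \<open>T\<^sup>n f\<close> is \<open>C y\<^sub>k\<close> (the term \<open>m = n\<close>) plus tail terms of the
  orbits of total norm at most \<open>\<parallel>C\<parallel> 2^(1-k)\<close>. So a given open set contains \<open>T\<^sup>n f\<close> for all
  \<open>n\<close> in a suitable \<open>A\<^sub>k\<close>.

  \<open>A\<^sub>k\<close> is a residue class modulo \<open>4 Q\<^sub>k\<close>, for rapidly growing \<open>Q\<^sub>k\<close>, minus the numbers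
  whose residue modulo a later period \<open>4 Q\<^sub>l\<close> lies within \<open>N\<^sub>l\<close> of its centre; these
  windows remove density at most \<open>\<Sum>\<^sub>l 2^(-l-3) / (4 Q\<^sub>k)\<close>.
\<close>

lemma lower_density_mono:
  assumes "A \<subseteq> E"
  shows "lower_density A \<le> lower_density E"
  unfolding lower_density_def
proof (rule Liminf_mono, rule always_eventually, rule allI)
  fix N
  have "card (A \<inter> {1..N}) \<le> card (E \<inter> {1..N})"
    using assms by (intro card_mono) auto
  then show "ereal (real (card (A \<inter> {1..N})) / real N) \<le> ereal (real (card (E \<inter> {1..N})) / real N)"
    by (simp add: divide_right_mono)
qed

lemma lower_density_pos:
  assumes "0 < c" and "\<forall>\<^sub>F N in sequentially. c \<le> real (card (A \<inter> {1..N})) / real N"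
  shows "0 < lower_density A"
proof -
  have "ereal c \<le> lower_density A"
    unfolding lower_density_def by (rule Liminf_bounded) (use assms(2) in simp)
  then show ?thesis
    using assms(1) by (metis ereal_less(2) less_le_trans zero_ereal_def)
qed

lemma mod_eq_imp_dist_ge:
  assumes "n mod p = m mod p" and "n \<noteq> (m::nat)"
  shows "int p \<le> \<bar>int n - int m\<bar>"
proof -
  have "int n mod int p = int m mod int p"
    using assms(1) by (metis zmod_int)
  then have "int p dvd int n - int m"
    by (simp add: mod_eq_dvd_iff)
  moreover have "int n - int m \<noteq> 0"
    using assms(2) by simp
  ultimately have "\<bar>int p\<bar> \<le> \<bar>int n - int m\<bar>"
    by (intro dvd_imp_le_int)
  then show ?thesis
    by simp
qed

lemma mod_notin_window_imp_dist_gt: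
  assumes m: "m mod p = c" and n: "n mod p \<notin> {c - d..c + d}" and "d \<le> c" and "c + d < p"
  shows "int d < \<bar>int n - int m\<bar>"
proof (rule ccontr)
  define e where "e = int n - int m"
  assume "\<not> int d < \<bar>int n - int m\<bar>"
  then have close: "- int d \<le> e" "e \<le> int d"
    unfolding e_def by linarith+
  have "int m = int c + int (m div p) * int p"
    using m div_mult_mod_eq[of m p] by (metis add.commute of_nat_add of_nat_mult)
  then have "int n = (int c + e) + int (m div p) * int p"
    unfolding e_def by simp
  then have "int (n mod p) = (int c + e) mod int p"
    by (metis mod_mult_self1 zmod_int)
  also have "\<dots> = int c + e"
    using close \<open>d \<le> c\<close> \<open>c + d < p\<close> by (intro mod_pos_pos_trivial) linarith+
  finally have "c - d \<le> n mod p" and "n mod p \<le> c + d"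
    using close \<open>d \<le> c\<close> by linarith+
  then show False
    using n by simp
qed

lemma card_mod_in_le:
  assumes "0 < p" and "finite I"
  shows "card {n \<in> {..N}. n mod p \<in> I} \<le> (N div p + 1) * card I"
proof -
  have "inj_on (\<lambda>n. (n div p, n mod p)) {n \<in> {..N}. n mod p \<in> I}"
    by (rule inj_onI) (simp, metis div_mult_mod_eq)
  moreover have "(\<lambda>n. (n div p, n mod p)) ` {n \<in> {..N}. n mod p \<in> I} \<subseteq> {..N div p} \<times> I"
    by (auto intro: div_le_mono)
  ultimately have "card {n \<in> {..N}. n mod p \<in> I} \<le> card ({..N div p} \<times> I)"
    using assms(2) by (intro card_inj_on_le) auto
  then show ?thesis
    by (simp add: card_cartesian_product)
qed

lemma card_mod_eq_ge:
  assumes "0 < c" and "c < p"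
  shows "N div p \<le> card {n \<in> {1..N}. n mod p = c}"
proof -
  have "inj_on (\<lambda>q. q * p + c) {..<N div p}"
    by (rule inj_onI) (use assms in simp)
  moreover have "(\<lambda>q. q * p + c) ` {..<N div p} \<subseteq> {n \<in> {1..N}. n mod p = c}"
  proof (rule image_subsetI)
    fix q assume "q \<in> {..<N div p}"
    then have "q * p + p \<le> N div p * p"
      by (metis Suc_leI lessThan_iff mult_Suc mult_le_mono1 add.commute)
    moreover have "N div p * p \<le> N"
      by (rule div_times_less_eq_dividend)
    ultimately have "q * p + c \<le> N"
      using assms by linarith
    then show "q * p + c \<in> {n \<in> {1..N}. n mod p = c}"
      using assms by auto
  qed
  ultimately show ?thesis
    using card_inj_on_le[of _ _ "{n \<in> {1..N}. n mod p = c}"] by fastforce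
qed

lemma real_of_nat_div_ge: "0 < p \<Longrightarrow> real m / real p - 1 \<le> real (m div p)"
proof -
  assume "0 < p"
  have "real m = real (m div p) * real p + real (m mod p)"
    by (metis div_mult_mod_eq of_nat_add of_nat_mult)
  moreover have "real (m mod p) < real p"
    using \<open>0 < p\<close> by simp
  ultimately show ?thesis
    using \<open>0 < p\<close> by (simp add: field_simps)
qed

section \<open>Separated sets of positive lower density\<close>

fun gap_scale :: "(nat \<Rightarrow> nat) \<Rightarrow> nat \<Rightarrow> nat" where
  "gap_scale N 0 = N 0 + 1"
| "gap_scale N (Suc l) = 2 ^ (Suc l + 7) * (N (Suc l) + 1) * gap_scale N l"

lemma gap_scale_pos: "0 < gap_scale N l"
  by (induction l) auto

lemma gap_scale_gt: "N l < gap_scale N l"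
proof (cases l)
  case (Suc j)
  have "1 \<le> 2 ^ (l + 7) * gap_scale N j"
    using gap_scale_pos[of N j] by (simp add: Suc_le_eq)
  from mult_le_mono2[OF this, of "N l + 1"]
  have "N l + 1 \<le> (N l + 1) * (2 ^ (l + 7) * gap_scale N j)"
    by simp
  then show ?thesis
    using Suc by (simp add: ac_simps)
qed simp

lemma gap_scale_Suc_ge: "2 * gap_scale N l \<le> gap_scale N (Suc l)"
proof -
  have "(2::nat) ^ 1 \<le> 2 ^ (Suc l + 7)"
    by (rule power_increasing) simp_all
  then have "2 \<le> 2 ^ (Suc l + 7) * (N (Suc l) + 1)"
    by (simp add: trans_le_add1)
  then show ?thesis
    by (simp only: gap_scale.simps mult_le_mono1)
qed

lemma mono_gap_scale: "mono (gap_scale N)"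
proof (rule mono_iff_le_Suc[THEN iffD2], rule allI)
  fix l
  show "gap_scale N l \<le> gap_scale N (Suc l)"
    using gap_scale_Suc_ge[of N l] by linarith
qed

lemma gap_scale_gt_index: "l < gap_scale N l"
proof (induction l)
  case (Suc l)
  then show ?case
    using gap_scale_Suc_ge[of N l] by linarith
qed simp

lemma gap_scale_growth:
  assumes "k < l"
  shows "2 ^ (l + 7) * (N l + 1) * gap_scale N k \<le> gap_scale N l"
proof -
  obtain j where l: "l = Suc j" and "k \<le> j"
    using assms by (cases l) auto
  have "gap_scale N k \<le> gap_scale N j"
    using mono_gap_scale \<open>k \<le> j\<close> by (rule monoD)
  then show ?thesis
    unfolding l gap_scale.simps(2) by (rule mult_le_mono2)
qed

definition gap_window :: "(nat \<Rightarrow> nat) \<Rightarrow> nat \<Rightarrow> nat set" where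
  "gap_window N l = {2 * gap_scale N l - N l .. 2 * gap_scale N l + N l}"

text \<open>Elements of \<open>gap_set N k\<close> and \<open>gap_set N l\<close>, \<open>k < l\<close>, are more than \<open>N l\<close> apart:
  modulo \<open>4 * gap_scale N l\<close> the latter sit at the centre of the window that the former
  avoid.\<close>
definition gap_set :: "(nat \<Rightarrow> nat) \<Rightarrow> nat \<Rightarrow> nat set" where
  "gap_set N k = {n. n mod (4 * gap_scale N k) = 2 * gap_scale N k \<and>
     (\<forall>l>k. n mod (4 * gap_scale N l) \<notin> gap_window N l)}"

definition window_hits :: "(nat \<Rightarrow> nat) \<Rightarrow> nat \<Rightarrow> nat \<Rightarrow> nat set" where
  "window_hits N l M = {n \<in> {..M}. n mod (4 * gap_scale N l) \<in> gap_window N l}"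

lemma gap_window_gt: "r \<in> gap_window N l \<Longrightarrow> gap_scale N l < r"
  using gap_scale_gt[of N l] unfolding gap_window_def by auto

lemma card_gap_window: "card (gap_window N l) = 2 * N l + 1"
  using gap_scale_gt[of N l] unfolding gap_window_def by simp

lemma gap_set_above:
  assumes "n \<in> gap_set N k"
  shows "N k < n"
proof -
  have "n mod (4 * gap_scale N k) = 2 * gap_scale N k"
    using assms unfolding gap_set_def by simp
  moreover have "n mod (4 * gap_scale N k) \<le> n"
    by (rule mod_less_eq_dividend)
  ultimately show ?thesis
    using gap_scale_gt[of N k] by linarith
qed

lemma disjoint_family_gap_set: "disjoint_family (gap_set N)"
proof -
  have less: "gap_set N k \<inter> gap_set N l = {}" if "k < l" for k l
  proof -
    have "2 * gap_scale N l \<in> gap_window N l"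
      unfolding gap_window_def by simp
    then have "n \<notin> gap_set N l" if "n \<in> gap_set N k" for n
      using that \<open>k < l\<close> unfolding gap_set_def by auto
    then show ?thesis
      by blast
  qed
  show ?thesis
    unfolding disjoint_family_on_def
  proof (intro ballI impI)
    fix k l :: nat
    assume "k \<noteq> l"
    then consider "k < l" | "l < k"
      by linarith
    then show "gap_set N k \<inter> gap_set N l = {}"
      by cases (use less in \<open>auto simp: Int_commute\<close>)
  qed
qed

lemma gap_set_separated_less:
  assumes "k < l" and "n \<in> gap_set N k" and "m \<in> gap_set N l"
  shows "int (N l) < \<bar>int n - int m\<bar>"
proof (rule mod_notin_window_imp_dist_gt)
  show "m mod (4 * gap_scale N l) = 2 * gap_scale N l"
    using assms(3) unfolding gap_set_def by simp
  show "n mod (4 * gap_scale N l) \<notin> {2 * gap_scale N l - N l .. 2 * gap_scale N l + N l}"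
    using assms(1,2) unfolding gap_set_def gap_window_def by simp
  show "N l \<le> 2 * gap_scale N l" "2 * gap_scale N l + N l < 4 * gap_scale N l"
    using gap_scale_gt[of N l] by linarith+
qed

lemma gap_set_separated:
  assumes "mono N" and "n \<in> gap_set N k" and "m \<in> gap_set N l" and "n \<noteq> m"
  shows "int (N k) < \<bar>int n - int m\<bar> \<and> int (N l) < \<bar>int n - int m\<bar>"
proof (cases k l rule: linorder_cases)
  case less
  then show ?thesis
    using gap_set_separated_less[OF less assms(2,3)] monoD[OF assms(1), of k l] by simp
next
  case equal
  have "n mod (4 * gap_scale N k) = m mod (4 * gap_scale N k)"
    using assms(2,3) equal unfolding gap_set_def by simp
  then have "int (4 * gap_scale N k) \<le> \<bar>int n - int m\<bar>"
    using assms(4) by (rule mod_eq_imp_dist_ge)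
  then show ?thesis
    using equal gap_scale_gt[of N k] by simp
next
  case greater
  then show ?thesis
    using gap_set_separated_less[OF greater assms(3,2)] monoD[OF assms(1), of l k]
    by (simp add: abs_minus_commute)
qed

lemma card_window_hits_mult_le:
  assumes "gap_scale N l \<le> M"
  shows "card (window_hits N l M) * (4 * gap_scale N l) \<le> 10 * M * (N l + 1)"
proof -
  define P where "P = 4 * gap_scale N l"
  have count: "card (window_hits N l M) \<le> (M div P + 1) * (2 * N l + 1)"
    using card_mod_in_le[of P "gap_window N l" M] gap_scale_pos[of N l]
    unfolding P_def window_hits_def card_gap_window by (simp add: gap_window_def)
  have periods: "(M div P + 1) * P \<le> 5 * M"
  proof -
    have "M div P * P \<le> M"
      by (rule div_times_less_eq_dividend)
    moreover have "P \<le> 4 * M"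
      using assms unfolding P_def by simp
    moreover have "(M div P + 1) * P = M div P * P + P"
      by simp
    ultimately show ?thesis
      by linarith
  qed
  from count have "card (window_hits N l M) * P \<le> (M div P + 1) * (2 * N l + 1) * P"
    by (rule mult_le_mono1)
  also have "\<dots> = (M div P + 1) * P * (2 * N l + 1)"
    by (simp only: ac_simps)
  also have "\<dots> \<le> 5 * M * (2 * N l + 1)"
    using periods by (rule mult_le_mono1)
  also have "\<dots> \<le> 10 * M * (N l + 1)"
    by simp
  finally show ?thesis
    unfolding P_def .
qed

lemma card_window_hits_le:
  assumes "k < l"
  shows "card (window_hits N l M) * 2 ^ (l + 3) * (4 * gap_scale N k) \<le> M"
proof (cases "gap_scale N l \<le> M")
  case False
  have "n mod (4 * gap_scale N l) \<notin> gap_window N l" if "n \<le> M" for n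
    using gap_window_gt[of "n mod (4 * gap_scale N l)" N l]
      mod_less_eq_dividend[of n "4 * gap_scale N l"] that False
    by linarith
  then have "window_hits N l M = {}"
    unfolding window_hits_def by auto
  then show ?thesis
    by simp
next
  case True
  define X where "X = card (window_hits N l M) * 2 ^ (l + 3) * (4 * gap_scale N k)"
  have "(2::nat) ^ (l + 7) = 16 * 2 ^ (l + 3)"
    by (simp add: power_add)
  then have "16 * X * (N l + 1)
      = card (window_hits N l M) * (4 * (2 ^ (l + 7) * (N l + 1) * gap_scale N k))"
    unfolding X_def by (simp only: ac_simps)
  also have "\<dots> \<le> card (window_hits N l M) * (4 * gap_scale N l)"
    using gap_scale_growth[OF assms, of N] by simp
  also have "\<dots> \<le> 10 * M * (N l + 1)"
    using True by (rule card_window_hits_mult_le)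
  finally have "16 * X \<le> 10 * M"
    using mult_le_cancel2[of "16 * X" "N l + 1" "10 * M"] by simp
  then show ?thesis
    unfolding X_def by linarith
qed

lemma card_UN_window_hits_le:
  "real (card (\<Union>l\<in>{k<..<M}. window_hits N l M)) \<le> real M / (16 * gap_scale N k)"
proof -
  define w where "w = real M / (4 * gap_scale N k)"
  have Q: "0 < real (gap_scale N k)"
    using gap_scale_pos[of N k] by simp
  have "card (\<Union>l\<in>{k<..<M}. window_hits N l M) \<le> (\<Sum>l\<in>{k<..<M}. card (window_hits N l M))"
    by (rule card_UN_le) simp
  then have "real (card (\<Union>l\<in>{k<..<M}. window_hits N l M)) \<le> (\<Sum>l\<in>{k<..<M}. real (card (window_hits N l M)))"
    by (simp only: of_nat_sum[symmetric] of_nat_le_iff)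
  also have "\<dots> \<le> (\<Sum>l\<in>{k<..<M}. w / 8 * (1/2) ^ l)"
  proof (rule sum_mono)
    fix l assume "l \<in> {k<..<M}"
    then have "card (window_hits N l M) * 2 ^ (l + 3) * (4 * gap_scale N k) \<le> M"
      by (intro card_window_hits_le) simp
    then have "real (card (window_hits N l M) * 2 ^ (l + 3) * (4 * gap_scale N k)) \<le> real M"
      by (simp only: of_nat_le_iff)
    then have "real (card (window_hits N l M)) * (4 * real (gap_scale N k) * 2 ^ (l + 3)) \<le> real M"
      by (simp add: ac_simps)
    then have "real (card (window_hits N l M)) \<le> real M / (4 * real (gap_scale N k) * 2 ^ (l + 3))"
      using Q by (simp add: pos_le_divide_eq)
    also have "\<dots> = w / 8 * (1/2) ^ l"
      unfolding w_def by (simp add: power_add power_one_over)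
    finally show "real (card (window_hits N l M)) \<le> w / 8 * (1/2) ^ l" .
  qed
  also have "\<dots> = w / 8 * (\<Sum>l\<in>{k<..<M}. (1/2) ^ l)"
    by (simp add: sum_distrib_left)
  also have "\<dots> \<le> w / 8 * 2"
    using geometric_sum_less[of "1/2::real" "{k<..<M}"] Q unfolding w_def
    by (intro mult_left_mono) simp_all
  finally show ?thesis
    unfolding w_def by simp
qed

lemma residue_class_minus_hits_subset:
  "{n \<in> {1..M}. n mod (4 * gap_scale N k) = 2 * gap_scale N k} - (\<Union>l\<in>{k<..<M}. window_hits N l M)
     \<subseteq> gap_set N k \<inter> {1..M}"
proof safe
  fix n assume n: "n \<in> {1..M}" "n mod (4 * gap_scale N k) = 2 * gap_scale N k"
    and avoids: "n \<notin> (\<Union>l\<in>{k<..<M}. window_hits N l M)"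
  have "n mod (4 * gap_scale N l) \<notin> gap_window N l" if "k < l" for l
  proof (cases "l < M")
    case True
    then show ?thesis
      using avoids n that unfolding window_hits_def by auto
  next
    case False
    then show ?thesis
      using gap_window_gt[of "n mod (4 * gap_scale N l)" N l] mod_less_eq_dividend[of n "4 * gap_scale N l"]
        gap_scale_gt_index[of l N] n(1) by auto
  qed
  then show "n \<in> gap_set N k"
    using n unfolding gap_set_def by simp
qed

lemma card_gap_set_ge:
  assumes M: "16 * gap_scale N k \<le> M"
  shows "real M / (8 * gap_scale N k) \<le> card (gap_set N k \<inter> {1..M})"
proof -
  define P where "P = 4 * gap_scale N k"
  define AP where "AP = {n \<in> {1..M}. n mod P = 2 * gap_scale N k}"
  define H where "H = (\<Union>l\<in>{k<..<M}. window_hits N l M)"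
  define w where "w = real M / real P"
  have P: "0 < real P"
    using gap_scale_pos[of N k] unfolding P_def by simp
  have "card AP - card H \<le> card (AP - H)"
    by (rule diff_card_le_card_Diff) (simp add: H_def window_hits_def)
  also have "\<dots> \<le> card (gap_set N k \<inter> {1..M})"
    using residue_class_minus_hits_subset unfolding AP_def H_def P_def by (intro card_mono) simp_all
  finally have "real (card AP) - real (card H) \<le> card (gap_set N k \<inter> {1..M})"
    by linarith
  moreover have "real (card H) \<le> w / 4"
    using card_UN_window_hits_le unfolding H_def w_def P_def by simp
  moreover have "w - 1 \<le> real (card AP)"
  proof -
    have "M div P \<le> card AP"
      unfolding AP_def P_def using gap_scale_pos[of N k] by (intro card_mod_eq_ge) simp_all
    then show ?thesis
      using real_of_nat_div_ge[of P M] P unfolding w_def by (simp add: of_nat_le_iff)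
  qed
  moreover have "1 \<le> w / 4"
    using M P unfolding w_def P_def by (simp add: field_simps)
  ultimately have "w / 2 \<le> card (gap_set N k \<inter> {1..M})"
    by linarith
  then show ?thesis
    unfolding w_def P_def by simp
qed

lemma gap_set_density: "0 < lower_density (gap_set N k)"
proof (rule lower_density_pos)
  show "0 < 1 / (8 * real (gap_scale N k))"
    using gap_scale_pos[of N k] by simp
  show "\<forall>\<^sub>F M in sequentially. 1 / (8 * real (gap_scale N k)) \<le> real (card (gap_set N k \<inter> {1..M})) / real M"
    unfolding eventually_sequentially
  proof (intro exI allI impI)
    fix M assume M: "16 * gap_scale N k \<le> M"
    then have "0 < real M"
      using gap_scale_pos[of N k] by simp
    with card_gap_set_ge[OF M]
    show "1 / (8 * real (gap_scale N k)) \<le> real (card (gap_set N k \<inter> {1..M})) / real M"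
      by (simp add: field_simps)
  qed
qed

section \<open>Unconditional tails of two-sided orbits\<close>

definition tail_bounded :: "(int \<Rightarrow> 'a::real_normed_vector) \<Rightarrow> nat \<Rightarrow> real \<Rightarrow> bool" where
  "tail_bounded u N e \<longleftrightarrow> (\<forall>F. finite F \<longrightarrow> (\<forall>j\<in>F. int N < \<bar>j\<bar>) \<longrightarrow> norm (sum u F) \<le> e)"

lemma tail_bounded_mono:
  assumes "tail_bounded u N e" and "N \<le> N'" and "e \<le> e'"
  shows "tail_bounded u N' e'"
  using assms unfolding tail_bounded_def by force

lemma tail_bounded_reindex:
  assumes "tail_bounded u N e" and "finite F" and "inj_on f F" and "\<And>m. m \<in> F \<Longrightarrow> int N < \<bar>f m\<bar>"
  shows "norm (\<Sum>m\<in>F. u (f m)) \<le> e"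
proof -
  have "norm (sum u (f ` F)) \<le> e"
    using assms unfolding tail_bounded_def by blast
  then show ?thesis
    by (simp add: sum.reindex[OF assms(3)])
qed

lemma uncond_conv_tail:
  assumes "uncond_conv x" and "0 < e"
  obtains N where "\<And>F g. finite F \<Longrightarrow> inj_on g F \<Longrightarrow> (\<And>j. j \<in> F \<Longrightarrow> N < g j) \<Longrightarrow>
    norm (\<Sum>j\<in>F. x (g j)) < e"
proof -
  obtain N where N: "\<And>F. finite F \<and> F \<inter> {..N} = {} \<Longrightarrow> norm (sum x F) < e"
    using assms unfolding uncond_conv_def by blast
  show ?thesis
  proof (rule that)
    fix F g assume "finite F" and "inj_on g F" and far: "\<And>j. j \<in> F \<Longrightarrow> N < g j"
    have "finite (g ` F) \<and> g ` F \<inter> {..N} = {}"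
      using \<open>finite F\<close> far by fastforce
    then have "norm (sum x (g ` F)) < e"
      by (rule N)
    then show "norm (\<Sum>j\<in>F. x (g j)) < e"
      by (simp add: sum.reindex \<open>inj_on g F\<close>)
  qed
qed

definition two_sided_orbit :: "('a \<Rightarrow> 'a) \<Rightarrow> ('a \<Rightarrow> 'a) \<Rightarrow> 'a \<Rightarrow> int \<Rightarrow> 'a" where
  "two_sided_orbit S T y j = (if 0 \<le> j then (S ^^ nat j) y else (T ^^ nat (- j)) y)"

lemma tail_bounded_two_sided_orbit:
  assumes "uncond_conv (\<lambda>n. (S ^^ n) y)" and "uncond_conv (\<lambda>n. (T ^^ n) y)" and "0 < e"
  shows "\<exists>N. tail_bounded (two_sided_orbit S T y) N e"
proof -
  obtain N1 where N1: "\<And>(F :: int set) g. finite F \<Longrightarrow> inj_on g F \<Longrightarrow> (\<And>j. j \<in> F \<Longrightarrow> N1 < g j) \<Longrightarrow>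
      norm (\<Sum>j\<in>F. (S ^^ g j) y) < e / 2"
    using uncond_conv_tail[OF assms(1)] assms(3) half_gt_zero by blast
  obtain N2 where N2: "\<And>(F :: int set) g. finite F \<Longrightarrow> inj_on g F \<Longrightarrow> (\<And>j. j \<in> F \<Longrightarrow> N2 < g j) \<Longrightarrow>
      norm (\<Sum>j\<in>F. (T ^^ g j) y) < e / 2"
    using uncond_conv_tail[OF assms(2)] assms(3) half_gt_zero by blast
  have "tail_bounded (two_sided_orbit S T y) (max N1 N2) e"
    unfolding tail_bounded_def
  proof (intro allI impI)
    fix F :: "int set"
    assume F: "finite F" and far: "\<forall>j\<in>F. int (max N1 N2) < \<bar>j\<bar>"
    have "(\<Sum>j\<in>F \<inter> {0..}. two_sided_orbit S T y j) = (\<Sum>j\<in>F \<inter> {0..}. (S ^^ nat j) y)"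
      by (rule sum.cong) (auto simp: two_sided_orbit_def)
    also have "norm \<dots> < e / 2"
      by (rule N1) (use F far in \<open>auto simp: inj_on_def zless_nat_eq_int_zless\<close>)
    finally have pos: "norm (\<Sum>j\<in>F \<inter> {0..}. two_sided_orbit S T y j) < e / 2" .
    have "(\<Sum>j\<in>F - {0..}. two_sided_orbit S T y j) = (\<Sum>j\<in>F - {0..}. (T ^^ nat (- j)) y)"
      by (rule sum.cong) (auto simp: two_sided_orbit_def)
    also have "norm \<dots> < e / 2"
      by (rule N2) (use F far in \<open>auto simp: inj_on_def zless_nat_eq_int_zless\<close>)
    finally have neg: "norm (\<Sum>j\<in>F - {0..}. two_sided_orbit S T y j) < e / 2" .
    have "sum (two_sided_orbit S T y) F
        = (\<Sum>j\<in>F \<inter> {0..}. two_sided_orbit S T y j) + (\<Sum>j\<in>F - {0..}. two_sided_orbit S T y j)"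
      by (rule sum.Int_Diff[OF F])
    then show "norm (sum (two_sided_orbit S T y) F) \<le> e"
      using pos neg norm_triangle_ineq[of "\<Sum>j\<in>F \<inter> {0..}. two_sided_orbit S T y j"
          "\<Sum>j\<in>F - {0..}. two_sided_orbit S T y j"] by simp
  qed
  then show ?thesis
    by blast
qed

lemma tail_thresholds_exist:
  assumes "\<And>l e. 0 < e \<Longrightarrow> \<exists>N. tail_bounded (u l) N e"
  shows "\<exists>N. mono N \<and> (\<forall>k l. l \<le> k \<longrightarrow> tail_bounded (u l) (N k) ((1/2) ^ (k + l)))"
proof -
  have "\<forall>l k. \<exists>N. tail_bounded (u l) N ((1/2) ^ (k + l))"
    using assms by simp
  then obtain th where th: "\<And>l k. tail_bounded (u l) (th l k) ((1/2) ^ (k + l))"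
    by metis
  define N where "N k = (\<Sum>k'\<le>k. \<Sum>l\<le>k'. th l k')" for k
  have "mono N"
    unfolding N_def by (intro monoI sum_mono2) auto
  moreover have "tail_bounded (u l) (N k) ((1/2) ^ (k + l))" if "l \<le> k" for k l
  proof (rule tail_bounded_mono[OF th])
    have "th l k \<le> (\<Sum>l\<le>k. th l k)"
      by (rule member_le_sum) (use that in auto)
    also have "\<dots> \<le> N k"
      unfolding N_def by (rule member_le_sum[where f = "\<lambda>k'. \<Sum>l\<le>k'. th l k'"]) auto
    finally show "th l k \<le> N k" .
  qed simp
  ultimately show ?thesis
    by blast
qed

section \<open>Gluing orbits along separated sets\<close>

locale separated_gluing =
  fixes u :: "nat \<Rightarrow> int \<Rightarrow> 'a::banach" and N :: "nat \<Rightarrow> nat" and A :: "nat \<Rightarrow> nat set"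
  assumes tail: "\<And>k l. l \<le> k \<Longrightarrow> tail_bounded (u l) (N k) ((1/2) ^ (k + l))"
    and disjoint: "disjoint_family A"
    and above: "\<And>k n. n \<in> A k \<Longrightarrow> N k < n"
    and separated: "\<And>k l n m. n \<in> A k \<Longrightarrow> m \<in> A l \<Longrightarrow> n \<noteq> m \<Longrightarrow>
      int (N k) < \<bar>int n - int m\<bar> \<and> int (N l) < \<bar>int n - int m\<bar>"
begin

definition label :: "nat \<Rightarrow> nat" where
  "label m = (THE k. m \<in> A k)"

lemma label_eq:
  assumes "m \<in> A k"
  shows "label m = k"
  unfolding label_def
proof (rule the_equality)
  show "m \<in> A k"
    by (fact assms)
  fix k' assume "m \<in> A k'"
  then show "k' = k"
    using assms disjoint unfolding disjoint_family_on_def by blast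
qed

lemma mem_A_label: "m \<in> (\<Union>k. A k) \<Longrightarrow> m \<in> A (label m)"
  using label_eq by blast

text \<open>\<open>glued 0\<close> is the series \<open>\<Sum>\<^sub>l \<Sum>\<^sub>m\<^sub>\<in>\<^sub>A\<^sub>l u\<^sub>l m\<close>; when \<open>u\<^sub>l\<close> is the two-sided orbit
  of \<open>y\<^sub>l\<close>, applying \<open>T\<^sup>n\<close> termwise turns it into \<open>glued n\<close>.\<close>
definition glued :: "int \<Rightarrow> nat \<Rightarrow> 'a" where
  "glued n m = (if m \<in> (\<Union>k. A k) then u (label m) (int m - n) else 0)"

lemma norm_sum_glued_le:
  assumes "finite F" and "F \<subseteq> (\<Union>k. A k)"
    and far: "\<And>m. m \<in> F \<Longrightarrow> int (N k) < \<bar>int m - n\<bar> \<and> int (N (label m)) < \<bar>int m - n\<bar>"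
  shows "norm (\<Sum>m\<in>F. u (label m) (int m - n)) \<le> 2 * (1/2) ^ k"
proof -
  define F' where "F' l = {m \<in> F. label m = l}" for l
  have inner: "norm (\<Sum>m\<in>F' l. u l (int m - n)) \<le> (1/2) ^ k * (1/2) ^ l" for l
  proof -
    have "norm (\<Sum>m\<in>F' l. u l (int m - n)) \<le> (1/2) ^ (max k l + l)"
    proof (rule tail_bounded_reindex[OF tail])
      show "finite (F' l)"
        using assms(1) unfolding F'_def by simp
      show "inj_on (\<lambda>m. int m - n) (F' l)"
        by (rule inj_onI) simp
      show "int (N (max k l)) < \<bar>int m - n\<bar>" if "m \<in> F' l" for m
        using far[of m] that unfolding F'_def by (simp add: max_def)
    qed simp
    also have "\<dots> \<le> (1/2) ^ k * (1/2) ^ l"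
      by (simp add: power_add[symmetric] power_decreasing)
    finally show ?thesis .
  qed
  have "(\<Sum>m\<in>F. u (label m) (int m - n)) = (\<Sum>l\<in>label ` F. \<Sum>m\<in>F' l. u l (int m - n))"
    unfolding F'_def by (subst sum.image_gen[OF assms(1)]) (auto intro!: sum.cong)
  then have "norm (\<Sum>m\<in>F. u (label m) (int m - n)) \<le> (\<Sum>l\<in>label ` F. norm (\<Sum>m\<in>F' l. u l (int m - n)))"
    by (simp only: norm_sum)
  also have "\<dots> \<le> (\<Sum>l\<in>label ` F. (1/2) ^ k * (1/2) ^ l)"
    by (rule sum_mono) (rule inner)
  also have "\<dots> = (1/2) ^ k * (\<Sum>l\<in>label ` F. (1/2) ^ l)"
    by (simp add: sum_distrib_left)
  also have "\<dots> \<le> (1/2) ^ k * 2"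
    using geometric_sum_less[of "1/2::real" "label ` F"] assms(1) by (intro mult_left_mono) simp_all
  finally show ?thesis
    by simp
qed

lemma summable_glued: "summable (glued 0)"
  unfolding summable_Cauchy
proof (intro allI impI)
  fix e :: real assume "0 < e"
  then obtain k where k: "(1/2::real) ^ k < e / 2"
    using real_arch_pow_inv[of "e / 2" "1/2::real"] by auto
  show "\<exists>M. \<forall>m\<ge>M. \<forall>m'. norm (sum (glued 0) {m..<m'}) < e"
  proof (intro exI allI impI)
    fix m m' assume m: "Suc (N k) \<le> m"
    define F where "F = {m..<m'} \<inter> (\<Union>k. A k)"
    have "sum (glued 0) {m..<m'} = (\<Sum>i\<in>F. u (label i) (int i - 0))"
      unfolding F_def glued_def by (subst sum.inter_restrict) (auto intro!: sum.cong)
    also have "norm \<dots> \<le> 2 * (1/2) ^ k"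
    proof (rule norm_sum_glued_le)
      show "finite F" "F \<subseteq> (\<Union>k. A k)"
        unfolding F_def by auto
      show "int (N k) < \<bar>int i - 0\<bar> \<and> int (N (label i)) < \<bar>int i - 0\<bar>" if "i \<in> F" for i
        using that m above[OF mem_A_label, of i] unfolding F_def by auto
    qed
    finally show "norm (sum (glued 0) {m..<m'}) < e"
      using k by linarith
  qed
qed

lemma glued_partial_sum_near:
  assumes n: "n \<in> A k" and "n < M"
  shows "norm ((\<Sum>m<M. glued (int n) m) - u k 0) \<le> 2 * (1/2) ^ k"
proof -
  define F where "F = {..<M} \<inter> (\<Union>k. A k) - {n}"
  have "(\<Sum>m<M. glued (int n) m) = (\<Sum>m\<in>{..<M} \<inter> (\<Union>k. A k). u (label m) (int m - int n))"
    unfolding glued_def by (subst sum.inter_restrict[symmetric]) auto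
  also have "\<dots> = u (label n) 0 + (\<Sum>m\<in>F. u (label m) (int m - int n))"
    unfolding F_def using n \<open>n < M\<close> by (subst sum.remove) auto
  finally have "(\<Sum>m<M. glued (int n) m) - u k 0 = (\<Sum>m\<in>F. u (label m) (int m - int n))"
    using label_eq[OF n] by simp
  also have "norm \<dots> \<le> 2 * (1/2) ^ k"
  proof (rule norm_sum_glued_le)
    show "finite F" "F \<subseteq> (\<Union>k. A k)"
      unfolding F_def by auto
    show "int (N k) < \<bar>int m - int n\<bar> \<and> int (N (label m)) < \<bar>int m - int n\<bar>" if "m \<in> F" for m
      using separated[OF mem_A_label n, of m] that unfolding F_def by auto
  qed
  finally show ?thesis .
qed

end

section \<open>Frequently dense sequences\<close>

definition frequently_dense :: "(nat \<Rightarrow> 'a::metric_space) \<Rightarrow> bool" where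
  "frequently_dense y \<longleftrightarrow> (\<forall>x r K. 0 < r \<longrightarrow> (\<exists>k\<ge>K. dist (y k) x < r))"

lemma dense_approachable:
  assumes "closure X = UNIV" and "0 < e"
  shows "\<exists>z\<in>X. dist z p < e"
proof -
  have "p \<in> closure X"
    using assms(1) by simp
  then show ?thesis
    unfolding closure_approachable using assms(2) by blast
qed

lemma separable_dense_sequence:
  assumes "separable_space TYPE('a::metric_space)"
  shows "\<exists>e :: nat \<Rightarrow> 'a. closure (range e) = UNIV"
proof -
  obtain E :: "'a set" where "countable E" and "closure E = UNIV"
    using assms unfolding separable_space_def by blast
  moreover have "E \<noteq> {}"
    using \<open>closure E = UNIV\<close> by auto
  ultimately show ?thesis
    using range_from_nat_into by metis
qed

text \<open>The sequence runs through all pairs \<open>(i, j)\<close>, approximating the \<open>i\<close>-th point of a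
  dense sequence to precision \<open>1 / (j + 1)\<close>.\<close>
lemma separable_frequently_dense_seq:
  assumes "separable_space TYPE('a::metric_space)" and "closure Y = UNIV"
  shows "\<exists>y. (\<forall>k. y k \<in> Y) \<and> frequently_dense (y :: nat \<Rightarrow> 'a)"
proof -
  obtain e :: "nat \<Rightarrow> 'a" where e_dense: "closure (range e) = UNIV"
    using separable_dense_sequence[OF assms(1)] by blast
  have "\<forall>l. \<exists>z. z \<in> Y \<and> dist z (e (fst (prod_decode l))) < inverse (real (Suc (snd (prod_decode l))))"
  proof
    fix l
    have "0 < inverse (real (Suc (snd (prod_decode l))))"
      by simp
    then show "\<exists>z. z \<in> Y \<and> dist z (e (fst (prod_decode l))) < inverse (real (Suc (snd (prod_decode l))))"
      using dense_approachable[OF assms(2)] by blast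
  qed
  from choice[OF this] obtain y where y: "\<And>l. y l \<in> Y"
    and close: "\<And>l. dist (y l) (e (fst (prod_decode l))) < inverse (real (Suc (snd (prod_decode l))))"
    by blast
  have "frequently_dense y"
    unfolding frequently_dense_def
  proof (intro allI impI)
    fix x r K assume "0 < (r::real)"
    then obtain i where i: "dist (e i) x < r / 2"
      using dense_approachable[OF e_dense, of "r / 2"] by auto
    obtain j where j: "inverse (real (Suc j)) < r / 2"
      using reals_Archimedean \<open>0 < r\<close> half_gt_zero by blast
    define l where "l = prod_encode (i, max K j)"
    have "dist (y l) (e i) < inverse (real (Suc (max K j)))"
      using close[of l] unfolding l_def by simp
    also have "\<dots> \<le> inverse (real (Suc j))"
      by (simp add: le_imp_inverse_le)
    also have "\<dots> < r / 2"
      by (rule j)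
    finally have "dist (y l) x < r"
      using i dist_triangle[of "y l" x "e i"] by simp
    moreover have "K \<le> l"
      unfolding l_def by (metis le_prod_encode_2 max.bounded_iff)
    ultimately show "\<exists>k\<ge>K. dist (y k) x < r"
      by blast
  qed
  then show ?thesis
    using y by blast
qed

lemma frequently_dense_image:
  assumes "frequently_dense y" and "continuous_on UNIV C" and "closure (range C) = UNIV"
  shows "frequently_dense (\<lambda>k. C (y k))"
  unfolding frequently_dense_def
proof (intro allI impI)
  fix x r K assume "0 < (r::real)"
  then obtain w where w: "dist (C w) x < r / 2"
    using dense_approachable[OF assms(3), of "r / 2"] by auto
  have "isCont C w"
    using assms(2) by (simp add: continuous_on_eq_continuous_at)
  then obtain d where "0 < d" and d: "\<And>z. dist z w < d \<Longrightarrow> dist (C z) (C w) < r / 2"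
    unfolding continuous_at_eps_delta using \<open>0 < r\<close> by (meson half_gt_zero)
  obtain k where "K \<le> k" and "dist (y k) w < d"
    using assms(1) \<open>0 < d\<close> unfolding frequently_dense_def by blast
  then have "dist (C (y k)) (C w) < r / 2"
    using d by blast
  then have "dist (C (y k)) x < r"
    using w dist_triangle[of "C (y k)" x "C w"] by linarith
  then show "\<exists>k\<ge>K. dist (C (y k)) x < r"
    using \<open>K \<le> k\<close> by blast
qed

lemma dom_inf_iff: "x \<in> dom_inf D T \<longleftrightarrow> (\<forall>k. (T ^^ k) x \<in> D)"
  unfolding dom_inf_def dom_pow_def by blast

lemma dom_inf_funpow: "x \<in> dom_inf D T \<Longrightarrow> (T ^^ n) x \<in> dom_inf D T"
  unfolding dom_inf_iff by (metis comp_apply funpow_add)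

locale fhc_criterion =
  fixes D :: "'a::banach set" and T :: "'a \<Rightarrow> 'a" and Y0 :: "'a set" and S :: "'a \<Rightarrow> 'a"
    and C :: "'a \<Rightarrow> 'a"
  assumes Y0_sub: "Y0 \<subseteq> dom_inf D T"
    and S_maps: "S ` Y0 \<subseteq> Y0"
    and TS: "\<And>y. y \<in> Y0 \<Longrightarrow> T (S y) = y"
    and S_sum: "\<And>y. y \<in> Y0 \<Longrightarrow> uncond_conv (\<lambda>n. (S ^^ n) y)"
    and T_sum: "\<And>y. y \<in> Y0 \<Longrightarrow> uncond_conv (\<lambda>n. (T ^^ n) y)"
    and C_bdd: "bounded_linear C"
    and C_range: "range C \<subseteq> dom_inf D T"
    and TnC_bdd: "\<And>n. n \<ge> 1 \<Longrightarrow> bounded_linear (\<lambda>x. (T ^^ n) (C x))"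
    and CT: "\<And>x. x \<in> dom_inf D T \<Longrightarrow> C (T x) = T (C x)"
begin

lemma funpow_C_commute:
  assumes "x \<in> dom_inf D T"
  shows "(T ^^ n) (C x) = C ((T ^^ n) x)"
proof (induction n)
  case (Suc n)
  then show ?case
    using CT[OF dom_inf_funpow[OF assms, of n]] by simp
qed simp

lemma funpow_S_mem: "y \<in> Y0 \<Longrightarrow> (S ^^ n) y \<in> Y0"
  by (induction n) (use S_maps in auto)

lemma funpow_T_funpow_S_same: "y \<in> Y0 \<Longrightarrow> (T ^^ n) ((S ^^ n) y) = y"
proof (induction n arbitrary: y)
  case (Suc n)
  have "(T ^^ Suc n) x = (T ^^ n) (T x)" for x
    by (simp add: funpow_swap1)
  then have "(T ^^ Suc n) ((S ^^ Suc n) y) = (T ^^ n) (T (S ((S ^^ n) y)))"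
    by simp
  also have "\<dots> = y"
    using Suc TS[OF funpow_S_mem[OF Suc.prems]] by simp
  finally show ?case .
qed simp

lemma funpow_T_funpow_S:
  assumes "y \<in> Y0"
  shows "(T ^^ n) ((S ^^ m) y) = two_sided_orbit S T y (int m - int n)"
proof (cases "n \<le> m")
  case True
  then have "(S ^^ m) y = (S ^^ n) ((S ^^ (m - n)) y)"
    by (metis comp_apply funpow_add le_add_diff_inverse)
  then show ?thesis
    using True funpow_T_funpow_S_same[OF funpow_S_mem[OF assms]]
    by (simp add: two_sided_orbit_def nat_diff_distrib')
next
  case False
  then have "(T ^^ n) ((S ^^ m) y) = (T ^^ (n - m)) ((T ^^ m) ((S ^^ m) y))"
    by (metis comp_apply funpow_add le_add_diff_inverse2 nat_le_linear)
  then show ?thesis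
    using False funpow_T_funpow_S_same[OF assms] by (simp add: two_sided_orbit_def nat_diff_distrib')
qed

end

locale fhc_construction = fhc_criterion D T Y0 S C +
    separated_gluing "\<lambda>l. two_sided_orbit S T (y l)" N A
  for D :: "'a::banach set" and T Y0 S C and y :: "nat \<Rightarrow> 'a" and N A +
  assumes y_mem: "\<And>k. y k \<in> Y0"
begin

definition glued_vector :: 'a where
  "glued_vector = C (suminf (glued 0))"

lemma glued_vector_dom: "glued_vector \<in> dom_inf D T"
  using C_range unfolding glued_vector_def by auto

lemma funpow_C_glued:
  assumes "1 \<le> n"
  shows "(T ^^ n) (C (glued 0 m)) = C (glued (int n) m)"
proof (cases "m \<in> (\<Union>k. A k)")
  case True
  have "glued 0 m = (S ^^ m) (y (label m))"
    using True unfolding glued_def by (simp add: two_sided_orbit_def)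
  moreover have "(S ^^ m) (y (label m)) \<in> dom_inf D T"
    using Y0_sub funpow_S_mem[OF y_mem] by blast
  ultimately have "(T ^^ n) (C (glued 0 m)) = C ((T ^^ n) ((S ^^ m) (y (label m))))"
    using funpow_C_commute by simp
  also have "\<dots> = C (glued (int n) m)"
    using True funpow_T_funpow_S[OF y_mem] unfolding glued_def by simp
  finally show ?thesis .
next
  case False
  then show ?thesis
    using linear_0[OF bounded_linear.linear[OF TnC_bdd[OF assms]]]
      linear_0[OF bounded_linear.linear[OF C_bdd]]
    unfolding glued_def by simp
qed

lemma norm_funpow_glued_vector_le:
  assumes n: "n \<in> A k"
  shows "norm ((T ^^ n) glued_vector - C (y k)) \<le> onorm C * (2 * (1/2) ^ k)"
proof -
  have "1 \<le> n"
    using above[OF n] by simp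
  have "(\<lambda>m. (T ^^ n) (C (glued 0 m))) sums (T ^^ n) glued_vector"
    unfolding glued_vector_def
    by (rule bounded_linear.sums[OF TnC_bdd[OF \<open>1 \<le> n\<close>] summable_sums[OF summable_glued]])
  then have "(\<lambda>M. \<Sum>m<M. C (glued (int n) m)) \<longlonglongrightarrow> (T ^^ n) glued_vector"
    unfolding sums_def funpow_C_glued[OF \<open>1 \<le> n\<close>] .
  then have "(\<lambda>M. C ((\<Sum>m<M. glued (int n) m) - y k)) \<longlonglongrightarrow> (T ^^ n) glued_vector - C (y k)"
    by (simp add: linear_diff linear_sum[OF bounded_linear.linear[OF C_bdd]]
        bounded_linear.linear[OF C_bdd] tendsto_diff)
  moreover have "\<forall>\<^sub>F M in sequentially. norm (C ((\<Sum>m<M. glued (int n) m) - y k)) \<le> onorm C * (2 * (1/2) ^ k)"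
    unfolding eventually_sequentially
  proof (intro exI allI impI)
    fix M assume "Suc n \<le> M"
    then have "norm ((\<Sum>m<M. glued (int n) m) - y k) \<le> 2 * (1/2) ^ k"
      using glued_partial_sum_near[OF n, of M] by (simp add: two_sided_orbit_def)
    then show "norm (C ((\<Sum>m<M. glued (int n) m) - y k)) \<le> onorm C * (2 * (1/2) ^ k)"
      using onorm[OF C_bdd] onorm_pos_le[OF C_bdd] mult_left_mono order_trans by blast
  qed
  ultimately show ?thesis
    by (rule Lim_norm_ubound[OF trivial_limit_sequentially])
qed

end

lemma (in fhc_construction) A_subset_visiting_times:
  assumes dense: "frequently_dense (\<lambda>k. C (y k))" and "open U" and "U \<noteq> {}"
  obtains k where "A k \<subseteq> {n. n \<ge> 1 \<and> (T ^^ n) glued_vector \<in> U}"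
proof -
  obtain x r where "0 < r" and "ball x r \<subseteq> U"
    using assms(2,3) by (meson ex_in_conv open_contains_ball)
  have "(\<lambda>k. onorm C * (2 * (1/2::real) ^ k)) \<longlonglongrightarrow> onorm C * (2 * 0)"
    by (intro tendsto_intros LIMSEQ_power_zero) simp
  then have "\<forall>\<^sub>F k in sequentially. onorm C * (2 * (1/2::real) ^ k) < r / 2"
    by (rule order_tendstoD(2)) (use \<open>0 < r\<close> in simp)
  then obtain K where K: "\<And>k. K \<le> k \<Longrightarrow> onorm C * (2 * (1/2) ^ k) < r / 2"
    unfolding eventually_sequentially by blast
  obtain k where "K \<le> k" and target: "dist (C (y k)) x < r / 2"
    using dense \<open>0 < r\<close> unfolding frequently_dense_def by (meson half_gt_zero)
  have "A k \<subseteq> {n. n \<ge> 1 \<and> (T ^^ n) glued_vector \<in> U}"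
  proof safe
    fix n assume n: "n \<in> A k"
    then show "1 \<le> n"
      using above[of n k] by simp
    have "dist ((T ^^ n) glued_vector) (C (y k)) < r / 2"
      using norm_funpow_glued_vector_le[OF n] K[OF \<open>K \<le> k\<close>] by (simp add: dist_norm)
    then have "dist x ((T ^^ n) glued_vector) < r"
      using target dist_triangle[of "(T ^^ n) glued_vector" x "C (y k)"] by (simp add: dist_commute)
    then show "(T ^^ n) glued_vector \<in> U"
      using \<open>ball x r \<subseteq> U\<close> by auto
  qed
  then show ?thesis
    by (rule that)
qed

lemma (in fhc_criterion) freq_hypercyclic_if_frequently_dense:
  assumes y: "\<And>k. y k \<in> Y0" and dense: "frequently_dense (\<lambda>k. C (y k))"
  shows "freq_hypercyclic D T"
proof -
  obtain N where "mono N"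
    and tail: "\<forall>k l. l \<le> k \<longrightarrow> tail_bounded (two_sided_orbit S T (y l)) (N k) ((1/2) ^ (k + l))"
    using tail_thresholds_exist[of "\<lambda>l. two_sided_orbit S T (y l)"]
      tail_bounded_two_sided_orbit[OF S_sum[OF y] T_sum[OF y]] by blast
  interpret fhc_construction D T Y0 S C y N "gap_set N"
    by unfold_locales
      (use tail y disjoint_family_gap_set gap_set_above gap_set_separated[OF \<open>mono N\<close>] in auto)
  show ?thesis
    unfolding freq_hypercyclic_def
  proof (intro exI conjI allI impI)
    show "glued_vector \<in> D"
      using glued_vector_dom unfolding dom_inf_iff by (metis funpow_0)
    show "(T ^^ n) glued_vector \<in> D" for n
      using glued_vector_dom unfolding dom_inf_iff by blast
  next
    fix U :: "'a set"
    assume "open U \<and> U \<noteq> {}"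
    then obtain k where "gap_set N k \<subseteq> {n. n \<ge> 1 \<and> (T ^^ n) glued_vector \<in> U}"
      using A_subset_visiting_times[OF dense] by blast
    then have "lower_density (gap_set N k) \<le> lower_density {n. n \<ge> 1 \<and> (T ^^ n) glued_vector \<in> U}"
      by (rule lower_density_mono)
    with gap_set_density show "0 < lower_density {n. n \<ge> 1 \<and> (T ^^ n) glued_vector \<in> U}"
      by (rule less_le_trans)
  qed
qed

theorem theorem3p2:
  fixes D :: "'a::banach set" and T :: "'a \<Rightarrow> 'a"
    and Y0 :: "'a set" and S :: "'a \<Rightarrow> 'a" and C :: "'a \<Rightarrow> 'a"
  assumes sep: "separable_space TYPE('a)"
    and lin: "lin_op D T"
    and Y0_sub: "Y0 \<subseteq> dom_inf D T"
    and Y0_dense: "closure Y0 = UNIV"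
    and S_maps: "S ` Y0 \<subseteq> Y0"
    and TS: "\<And>y. y \<in> Y0 \<Longrightarrow> T (S y) = y"
    and S_sum: "\<And>y. y \<in> Y0 \<Longrightarrow> uncond_conv (\<lambda>n. (S ^^ n) y)"
    and T_sum: "\<And>y. y \<in> Y0 \<Longrightarrow> uncond_conv (\<lambda>n. (T ^^ n) y)"
    and C_bdd: "bounded_linear C"
    and C_range: "range C \<subseteq> dom_inf D T"
    and TnC_bdd: "\<And>n. n \<ge> 1 \<Longrightarrow> bounded_linear (\<lambda>x. (T ^^ n) (C x))"
    and CT: "\<And>x. x \<in> dom_inf D T \<Longrightarrow> C (T x) = T (C x)"
    and C_dense: "closure (range C) = UNIV"
  shows "freq_hypercyclic D T"
proof -
  interpret fhc_criterion D T Y0 S C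
    by (rule fhc_criterion.intro) (fact Y0_sub S_maps TS S_sum T_sum C_bdd C_range TnC_bdd CT)+
  obtain y where y: "\<And>k. y k \<in> Y0" and "frequently_dense y"
    using separable_frequently_dense_seq[OF sep Y0_dense] by blast
  have "frequently_dense (\<lambda>k. C (y k))"
    using \<open>frequently_dense y\<close> linear_continuous_on[OF C_bdd] C_dense by (rule frequently_dense_image)
  with y show ?thesis
    by (rule freq_hypercyclic_if_frequently_dense)
qed

end
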